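(* Let $X$ be a topological space. The following are equivalent: (1) $X$ is hereditarily Baire; (2) every fragmentable function $f\colon X\to\mathbb R$ has (PCP). Moreover, if $X$ is perfectly normal, (1) and (2) are equivalent to: (3) every function $f\colon X\to\mathbb R$ with the Lebesgue property has (PCP).
   Context: A topological space is Baire if every nonempty open subset of it is nonmeager in it; it is hereditarily Baire if every nonempty closed subspace is Baire. For $f\colon X\to\mathbb R$: $f$ is fragmentable if for every $\varepsilon>0$ and every nonempty closed $F\subseteq X$ there is an open $U$ with $U\cap F\neq\emptyset$ and $\operatorname{diam} f(U\cap F)<\varepsilon$; $f$ has (PCP) if for every nonempty closed $F\subseteq X$ the restriction $f|_F$ has a point of continuity; $f$ has the Lebesgue property if for every $\varepsilon>0$ there are closed sets $X_n$ ($n\in\mathbb N$) with $X=\bigcup_n X_n$ and $\operatorname{diam} f(X_n)\le\varepsilon$ for all $n$. *)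

theory Defs
  imports "HOL-Analysis.Analysis"
begin

definition nowhere_dense_in :: "'a topology \<Rightarrow> 'a set \<Rightarrow> bool" where
  "nowhere_dense_in X S \<longleftrightarrow> S \<subseteq> topspace X \<and> X interior_of (X closure_of S) = {}"

definition meager_in :: "'a topology \<Rightarrow> 'a set \<Rightarrow> bool" where
  "meager_in X S \<longleftrightarrow> (\<exists>N :: nat \<Rightarrow> 'a set. (\<forall>n. nowhere_dense_in X (N n)) \<and> S \<subseteq> (\<Union>n. N n))"

definition baire_space :: "'a topology \<Rightarrow> bool" where
  "baire_space X \<longleftrightarrow> (\<forall>U. openin X U \<and> U \<noteq> {} \<longrightarrow> \<not> meager_in X U)"

definition hereditarily_baire :: "'a topology \<Rightarrow> bool" where
  "hereditarily_baire X \<longleftrightarrow> (\<forall>F. closedin X F \<and> F \<noteq> {} \<longrightarrow> baire_space (subtopology X F))"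

text \<open>diam A < e, resp. diam A \<le> e, for a set of reals (diam of unbounded set is infinite).\<close>
definition diam_less :: "real set \<Rightarrow> real \<Rightarrow> bool" where
  "diam_less A e \<longleftrightarrow> bounded A \<and> diameter A < e"

definition diam_le :: "real set \<Rightarrow> real \<Rightarrow> bool" where
  "diam_le A e \<longleftrightarrow> bounded A \<and> diameter A \<le> e"

definition fragmentable :: "'a topology \<Rightarrow> ('a \<Rightarrow> real) \<Rightarrow> bool" where
  "fragmentable X f \<longleftrightarrow>
     (\<forall>e>0. \<forall>F. closedin X F \<and> F \<noteq> {} \<longrightarrow>
        (\<exists>U. openin X U \<and> U \<inter> F \<noteq> {} \<and> diam_less (f ` (U \<inter> F)) e))"

definition continuity_point_on :: "'a topology \<Rightarrow> 'a set \<Rightarrow> ('a \<Rightarrow> real) \<Rightarrow> 'a \<Rightarrow> bool" where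
  "continuity_point_on X F f x \<longleftrightarrow> x \<in> F \<and>
     (\<forall>e>0. \<exists>U. openin X U \<and> x \<in> U \<and> (\<forall>y\<in>U \<inter> F. \<bar>f y - f x\<bar> < e))"

definition has_PCP :: "'a topology \<Rightarrow> ('a \<Rightarrow> real) \<Rightarrow> bool" where
  "has_PCP X f \<longleftrightarrow> (\<forall>F. closedin X F \<and> F \<noteq> {} \<longrightarrow> (\<exists>x\<in>F. continuity_point_on X F f x))"

definition lebesgue_property :: "'a topology \<Rightarrow> ('a \<Rightarrow> real) \<Rightarrow> bool" where
  "lebesgue_property X f \<longleftrightarrow>
     (\<forall>e>0. \<exists>C :: nat \<Rightarrow> 'a set. (\<forall>n. closedin X (C n) \<and> diam_le (f ` C n) e) \<and>
                               topspace X = (\<Union>n. C n))"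

definition perfectly_normal :: "'a topology \<Rightarrow> bool" where
  "perfectly_normal X \<longleftrightarrow> normal_space X \<and> (\<forall>C. closedin X C \<longrightarrow> gdelta_in X C)"

end

theory Submission
  imports Defs
begin

text \<open>
  If X is hereditarily Baire and f is fragmentable, then on a nonempty closed set F the points
  having a neighbourhood on which f restricted to F oscillates by less than 1/(n+1) form an open
  set whose complement has empty interior in F; by the Baire property of F these sets have a
  common point, which is a point of continuity of f restricted to F. A function with the Lebesgue
  property is fragmentable on a hereditarily Baire space, since on a nonempty closed F one of
  the countably many closed pieces of small oscillation has interior in F.

  Conversely, if a nonempty closed F is not Baire, some nonempty relatively open U in F is covered
  by an increasing sequence of closed sets P n, none of which contains a nonempty relatively
  open subset of U. Let f be 1/(n+2) on the points of U first reached by P n, 1 on the rest of the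
  closure K of U, and 0 off K. Then f restricted to K is nowhere continuous, since every point of
  K is approached by points of U of arbitrarily high level; but f is fragmentable, and its level
  sets are intersections of open and closed sets, hence F-sigma when X is perfectly normal, which
  gives the Lebesgue property.
\<close>

lemma diam_less_subset: "diam_less B e \<Longrightarrow> A \<subseteq> B \<Longrightarrow> diam_less A e"
  unfolding diam_less_def by (meson bounded_subset diameter_subset order.strict_trans1)

lemma diam_less_imp_abs_diff_less: "diam_less A e \<Longrightarrow> x \<in> A \<Longrightarrow> y \<in> A \<Longrightarrow> \<bar>x - y\<bar> < e"
  unfolding diam_less_def by (metis diameter_bounded_bound dist_real_def order.strict_trans1)

lemma diam_le_imp_diam_less: "diam_le A d \<Longrightarrow> d < e \<Longrightarrow> diam_less A e"
  unfolding diam_le_def diam_less_def by simp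

lemma diam_le_singleton: "A \<subseteq> {c} \<Longrightarrow> 0 \<le> e \<Longrightarrow> diam_le A e"
  unfolding diam_le_def by (cases "A = {}") (auto simp: subset_singleton_iff)

lemma diam_le_image_constant:
  assumes "\<And>x y. x \<in> T \<Longrightarrow> y \<in> T \<Longrightarrow> f x = f y" "0 \<le> e"
  shows "diam_le (f ` T) e"
proof (cases "T = {}")
  case True
  then show ?thesis
    using diam_le_singleton[of "f ` T" 0 e] assms(2) by simp
next
  case False
  then obtain x where "x \<in> T"
    by blast
  then have "f ` T \<subseteq> {f x}"
    using assms(1) by blast
  then show ?thesis
    using assms(2) by (rule diam_le_singleton)
qed

lemma diam_less_atLeastAtMost:
  assumes "A \<subseteq> {a..b}" "a \<le> b" "b - a < e"
  shows "diam_less A e"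
proof -
  have "bounded A"
    using bounded_subset[OF bounded_closed_interval assms(1)] .
  moreover have "diameter A \<le> b - a"
  proof (rule diameter_le)
    show "A \<noteq> {} \<or> 0 \<le> b - a"
      using assms(2) by simp
    show "norm (x - y) \<le> b - a" if "x \<in> A" "y \<in> A" for x y
    proof -
      have "x \<in> {a..b}" "y \<in> {a..b}"
        using that assms(1) by auto
      then show ?thesis
        by (simp add: abs_le_iff)
    qed
  qed
  ultimately show ?thesis
    using assms(3) unfolding diam_less_def by linarith
qed

lemma diam_less_singleton: "A \<subseteq> {c} \<Longrightarrow> 0 < e \<Longrightarrow> diam_less A e"
  using diam_less_atLeastAtMost[of A c c e] by simp

lemma baire_space_closed_cover:
  fixes C :: "nat \<Rightarrow> 'a set"
  assumes "baire_space Y" "topspace Y \<noteq> {}"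
    and "\<And>n. closedin Y (C n)" "topspace Y \<subseteq> (\<Union>n. C n)"
  obtains n where "Y interior_of C n \<noteq> {}"
proof -
  have "\<exists>n. Y interior_of C n \<noteq> {}"
  proof (rule ccontr)
    assume "\<nexists>n. Y interior_of C n \<noteq> {}"
    then have "nowhere_dense_in Y (C n)" for n
      using assms(3)[of n] closedin_subset[OF assms(3)]
      by (simp add: nowhere_dense_in_def closure_of_closedin)
    then have "meager_in Y (topspace Y)"
      unfolding meager_in_def using assms(4) by blast
    moreover have "\<not> meager_in Y (topspace Y)"
      using assms(1,2) openin_topspace unfolding baire_space_def by blast
    ultimately show False
      by contradiction
  qed
  then show thesis
    using that by blast
qed

lemma subtopology_interior_of_nonempty:
  assumes "subtopology X F interior_of S \<noteq> {}"
  obtains V where "openin X V" "V \<inter> F \<noteq> {}" "V \<inter> F \<subseteq> S"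
proof -
  obtain z where "z \<in> subtopology X F interior_of S"
    using assms by blast
  then obtain T where "openin (subtopology X F) T" "z \<in> T" "T \<subseteq> S"
    by (auto simp: interior_of_def)
  then obtain V where "openin X V" "T = V \<inter> F"
    by (auto simp: openin_subtopology)
  with \<open>z \<in> T\<close> \<open>T \<subseteq> S\<close> show thesis
    using that by blast
qed

lemma nowhere_dense_in_Un:
  assumes "nowhere_dense_in Y S" "nowhere_dense_in Y T"
  shows "nowhere_dense_in Y (S \<union> T)"
  using assms interior_of_union_eq_empty[of Y "Y closure_of S" "Y closure_of T"]
  by (simp add: nowhere_dense_in_def)

lemma nowhere_dense_in_UN_atMost:
  fixes N :: "nat \<Rightarrow> 'a set"
  shows "(\<And>j. j \<le> n \<Longrightarrow> nowhere_dense_in Y (N j)) \<Longrightarrow> nowhere_dense_in Y (\<Union>j\<le>n. N j)"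
proof (induction n)
  case 0
  then show ?case by simp
next
  case (Suc n)
  then show ?case
    by (simp add: atMost_Suc nowhere_dense_in_Un)
qed

lemma nowhere_dense_in_subtopology_not_subset_closure:
  assumes "nowhere_dense_in (subtopology X F) M" "openin X V" "V \<inter> F \<noteq> {}"
  shows "\<not> V \<inter> F \<subseteq> X closure_of M"
proof
  assume "V \<inter> F \<subseteq> X closure_of M"
  moreover have "F \<inter> M = M"
    using assms(1) by (auto simp: nowhere_dense_in_def)
  ultimately have "V \<inter> F \<subseteq> (subtopology X F) closure_of M"
    by (simp add: closure_of_subtopology)
  moreover have "openin (subtopology X F) (V \<inter> F)"
    using assms(2) openin_subtopology_Int by blast
  ultimately have "V \<inter> F \<subseteq> (subtopology X F) interior_of ((subtopology X F) closure_of M)"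
    by (simp add: interior_of_maximal)
  then show False
    using assms(1,3) by (simp add: nowhere_dense_in_def)
qed

lemma fragmentable_openin_Int_closedin:
  assumes "fragmentable X f" "closedin X F" "openin X V" "V \<inter> F \<noteq> {}" "e > 0"
  obtains U where "openin X U" "U \<inter> V \<inter> F \<noteq> {}" "diam_less (f ` (U \<inter> V \<inter> F)) e"
proof -
  define H where "H = X closure_of (V \<inter> F)"
  have "V \<inter> F \<subseteq> H"
    unfolding H_def using closedin_subset[OF assms(2)] by (intro closure_of_subset) blast
  then have "closedin X H" "H \<noteq> {}"
    using assms(4) unfolding H_def by auto
  then obtain U where U: "openin X U" "U \<inter> H \<noteq> {}" "diam_less (f ` (U \<inter> H)) e"
    using assms(1)[unfolded fragmentable_def, rule_format, OF assms(5), of H] by blast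
  have "U \<inter> (V \<inter> F) \<noteq> {}"
    using U(2) openin_Int_closure_of_eq_empty[OF U(1)] unfolding H_def by simp
  moreover have "diam_less (f ` (U \<inter> V \<inter> F)) e"
    using U(3) by (rule diam_less_subset) (use \<open>V \<inter> F \<subseteq> H\<close> in blast)
  ultimately show thesis
    using that U(1) by (simp add: Int_assoc)
qed

definition small_oscillation_set :: "'a topology \<Rightarrow> 'a set \<Rightarrow> ('a \<Rightarrow> real) \<Rightarrow> real \<Rightarrow> 'a set"
  where "small_oscillation_set X F f e = \<Union>{U. openin X U \<and> diam_less (f ` (U \<inter> F)) e}"

lemma openin_small_oscillation_set: "openin X (small_oscillation_set X F f e)"
  unfolding small_oscillation_set_def by (rule openin_Union) simp

lemma fragmentable_interior_of_large_oscillation_empty: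
  assumes "fragmentable X f" "closedin X F" "e > 0"
  shows "subtopology X F interior_of (F - small_oscillation_set X F f e) = {}"
proof (rule ccontr)
  assume "subtopology X F interior_of (F - small_oscillation_set X F f e) \<noteq> {}"
  then obtain V where V: "openin X V" "V \<inter> F \<noteq> {}" "V \<inter> F \<subseteq> F - small_oscillation_set X F f e"
    by (rule subtopology_interior_of_nonempty)
  obtain U where U: "openin X U" "U \<inter> V \<inter> F \<noteq> {}" "diam_less (f ` (U \<inter> V \<inter> F)) e"
    using fragmentable_openin_Int_closedin[OF assms(1,2) V(1,2) assms(3)] .
  have "U \<inter> V \<subseteq> small_oscillation_set X F f e"
    unfolding small_oscillation_set_def using U(1,3) V(1) by (auto simp: Int_assoc)
  then show False
    using U(2) V(3) by blast
qed

lemma continuity_point_on_if_small_oscillation: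
  assumes "x \<in> F" "\<And>n. x \<in> small_oscillation_set X F f (inverse (Suc n))"
  shows "continuity_point_on X F f x"
  unfolding continuity_point_on_def
proof (intro conjI allI impI)
  fix e :: real
  assume "e > 0"
  then obtain n where n: "inverse (real (Suc n)) < e"
    using reals_Archimedean by blast
  obtain U where U: "openin X U" "x \<in> U" "diam_less (f ` (U \<inter> F)) (inverse (Suc n))"
    using assms(2)[of n] unfolding small_oscillation_set_def by blast
  have "\<bar>f y - f x\<bar> < e" if "y \<in> U \<inter> F" for y
    using diam_less_imp_abs_diff_less[OF U(3)] that U(2) assms(1) n by fastforce
  then show "\<exists>U. openin X U \<and> x \<in> U \<and> (\<forall>y\<in>U \<inter> F. \<bar>f y - f x\<bar> < e)"
    using U(1,2) by blast
qed (use assms(1) in simp)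

lemma hereditarily_baire_fragmentable_imp_PCP:
  assumes "hereditarily_baire X" "fragmentable X f"
  shows "has_PCP X f"
  unfolding has_PCP_def
proof (intro allI impI)
  fix F
  assume F: "closedin X F \<and> F \<noteq> {}"
  define D where "D n = F - small_oscillation_set X F f (inverse (Suc n))" for n
  have baire: "baire_space (subtopology X F)"
    using assms(1) F unfolding hereditarily_baire_def by blast
  have top: "topspace (subtopology X F) = F"
    using F closedin_subset[of X F] by auto
  have closed: "closedin (subtopology X F) (D n)" for n
  proof -
    have "D n = F \<inter> (topspace X - small_oscillation_set X F f (inverse (Suc n)))"
      unfolding D_def using F closedin_subset by blast
    moreover have "closedin X (topspace X - small_oscillation_set X F f (inverse (Suc n)))"
      by (rule closedin_diff[OF closedin_topspace openin_small_oscillation_set])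
    ultimately show ?thesis
      by (simp add: closedin_subtopology_Int_closed)
  qed
  have "\<not> F \<subseteq> (\<Union>n. D n)"
  proof
    assume cover: "F \<subseteq> (\<Union>n. D n)"
    obtain n where "subtopology X F interior_of D n \<noteq> {}"
      by (rule baire_space_closed_cover[OF baire _ closed]) (use F top cover in auto)
    then show False
      using fragmentable_interior_of_large_oscillation_empty[OF assms(2)] F unfolding D_def
      by simp
  qed
  then obtain x where "x \<in> F" "\<And>n. x \<notin> D n"
    by blast
  then show "\<exists>x\<in>F. continuity_point_on X F f x"
    unfolding D_def by (blast intro: continuity_point_on_if_small_oscillation)
qed

lemma hereditarily_baire_lebesgue_imp_fragmentable:
  assumes "hereditarily_baire X" "lebesgue_property X f"
  shows "fragmentable X f"
  unfolding fragmentable_def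
proof (intro allI impI)
  fix e :: real and F
  assume e: "e > 0" and F: "closedin X F \<and> F \<noteq> {}"
  obtain C :: "nat \<Rightarrow> 'a set" where C: "\<And>n. closedin X (C n)" "\<And>n. diam_le (f ` C n) (e/2)"
    "topspace X = (\<Union>n. C n)"
    using assms(2) e unfolding lebesgue_property_def by (meson half_gt_zero)
  have baire: "baire_space (subtopology X F)"
    using assms(1) F unfolding hereditarily_baire_def by blast
  have top: "topspace (subtopology X F) = F"
    using F closedin_subset[of X F] by auto
  have closed: "closedin (subtopology X F) (F \<inter> C n)" for n
    using C(1) by (rule closedin_subtopology_Int_closed)
  have cover: "topspace (subtopology X F) \<subseteq> (\<Union>n. F \<inter> C n)"
    using C(3) by auto
  obtain n where "subtopology X F interior_of (F \<inter> C n) \<noteq> {}"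
    by (rule baire_space_closed_cover[OF baire _ closed cover]) (use F top in auto)
  then obtain V where V: "openin X V" "V \<inter> F \<noteq> {}" "V \<inter> F \<subseteq> F \<inter> C n"
    by (rule subtopology_interior_of_nonempty)
  have "diam_less (f ` C n) e"
    using C(2)[of n] by (rule diam_le_imp_diam_less) (use e in simp)
  then have "diam_less (f ` (V \<inter> F)) e"
    by (rule diam_less_subset) (use V(3) in blast)
  then show "\<exists>U. openin X U \<and> U \<inter> F \<noteq> {} \<and> diam_less (f ` (U \<inter> F)) e"
    using V(1,2) by blast
qed

lemma perfectly_normal_openin_imp_fsigma_in:
  assumes "perfectly_normal X" "openin X U"
  shows "fsigma_in X U"
proof -
  have "gdelta_in X (topspace X - U)"
    using assms unfolding perfectly_normal_def by (simp add: closedin_diff)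
  then show ?thesis
    using openin_subset[OF assms(2)] by (simp add: fsigma_in_gdelta_in)
qed

lemma fsigma_cover_closed_refinement:
  fixes \<S> :: "'a set set"
  assumes "countable \<S>" "\<And>S. S \<in> \<S> \<Longrightarrow> fsigma_in X S"
  obtains C :: "nat \<Rightarrow> 'a set"
    where "\<And>n. closedin X (C n)" "\<And>n. C n = {} \<or> (\<exists>S\<in>\<S>. C n \<subseteq> S)" "(\<Union>n. C n) = \<Union>\<S>"
proof -
  have "\<forall>S\<in>\<S>. \<exists>\<T>. countable \<T> \<and> \<T> \<subseteq> Collect (closedin X) \<and> \<Union>\<T> = S"
    using assms(2) by (simp add: fsigma_in_def union_of_def)
  from bchoice[OF this] obtain \<T>
    where \<T>: "\<forall>S\<in>\<S>. countable (\<T> S) \<and> \<T> S \<subseteq> Collect (closedin X) \<and> \<Union>(\<T> S) = S"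
    by blast
  define \<C> where "\<C> = insert {} (\<Union>S\<in>\<S>. \<T> S)"
  have "countable \<C>"
    unfolding \<C>_def using assms(1) \<T> by auto
  then have range_C: "range (from_nat_into \<C>) = \<C>"
    unfolding \<C>_def by (simp add: range_from_nat_into)
  have C: "from_nat_into \<C> n \<in> \<C>" for n
    using range_C by blast
  have closed: "closedin X T" and refines: "T = {} \<or> (\<exists>S\<in>\<S>. T \<subseteq> S)" if "T \<in> \<C>" for T
    using that \<T> unfolding \<C>_def by auto
  have "\<Union>\<C> = (\<Union>S\<in>\<S>. \<Union>(\<T> S))"
    unfolding \<C>_def by blast
  also have "\<dots> = \<Union>\<S>"
    using \<T> by simp
  finally have "(\<Union>n. from_nat_into \<C> n) = \<Union>\<S>"
    using range_C by simp
  then show thesis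
    using that closed[OF C] refines[OF C] by blast
qed

lemma lebesgue_property_if_constant_on_fsigma_cover:
  fixes X :: "'a topology"
  assumes "countable \<S>" "\<And>S. S \<in> \<S> \<Longrightarrow> fsigma_in X S" "topspace X \<subseteq> \<Union>\<S>"
    and "\<And>S x y. S \<in> \<S> \<Longrightarrow> x \<in> S \<Longrightarrow> y \<in> S \<Longrightarrow> f x = f y"
  shows "lebesgue_property X f"
proof -
  obtain C :: "nat \<Rightarrow> 'a set" where C: "\<And>n. closedin X (C n)" "\<And>n. C n = {} \<or> (\<exists>S\<in>\<S>. C n \<subseteq> S)"
    "(\<Union>n. C n) = \<Union>\<S>"
    using fsigma_cover_closed_refinement[OF assms(1,2)] by blast
  have const: "f x = f y" if "x \<in> C n" "y \<in> C n" for n x y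
    using C(2)[of n] assms(4) that by blast
  have cover: "topspace X = (\<Union>n. C n)"
    using assms(3) C(1,3) closedin_subset by blast
  show ?thesis
    unfolding lebesgue_property_def
  proof (intro allI impI exI[where x = C] conjI)
    show "closedin X (C n)" for n
      by (rule C(1))
    show "diam_le (f ` C n) e" if "e > 0" for e n
      using diam_le_image_constant[OF const less_imp_le[OF that]] .
  qed (rule cover)
qed

text \<open>The set U of the proof idea is W \<inter> K.\<close>

locale meager_layering =
  fixes X :: "'a topology" and K W :: "'a set" and P :: "nat \<Rightarrow> 'a set"
  assumes closedin_K: "closedin X K"
    and openin_W: "openin X W"
    and W_Int_K_nonempty: "W \<inter> K \<noteq> {}"
    and K_subset_closure: "K \<subseteq> X closure_of (W \<inter> K)"
    and closedin_P: "closedin X (P n)"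
    and P_subset_K: "P n \<subseteq> K"
    and incseq_P: "incseq P"
    and W_Int_K_subset_UN_P: "W \<inter> K \<subseteq> (\<Union>n. P n)"
    and P_no_interior: "openin X V \<Longrightarrow> V \<inter> W \<inter> K \<noteq> {} \<Longrightarrow> \<not> V \<inter> W \<inter> K \<subseteq> P n"
begin

definition level :: "'a \<Rightarrow> nat"
  where "level x = (LEAST n. x \<in> P n)"

lemma level_le_iff:
  assumes "x \<in> W \<inter> K"
  shows "level x \<le> n \<longleftrightarrow> x \<in> P n"
proof
  have "\<exists>n. x \<in> P n"
    using assms W_Int_K_subset_UN_P by blast
  then have "x \<in> P (level x)"
    unfolding level_def by (rule LeastI_ex)
  then show "x \<in> P n" if "level x \<le> n"
    using incseq_P that by (auto simp: incseq_def)
  show "level x \<le> n" if "x \<in> P n"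
    unfolding level_def using that by (rule Least_le)
qed

lemma level_less_iff:
  assumes "x \<in> W \<inter> K"
  shows "level x < n \<longleftrightarrow> x \<in> \<Union>(P ` {..<n})"
proof -
  have "level x < n \<longleftrightarrow> (\<exists>j<n. level x \<le> j)"
    by (meson le_less_trans order_refl)
  then show ?thesis
    by (auto simp: level_le_iff[OF assms])
qed

lemma closedin_lower_layers: "closedin X (\<Union>(P ` {..<n}))"
  by (intro closedin_Union) (auto simp: closedin_P)

lemma mem_level_set_iff:
  "x \<in> (W - \<Union>(P ` {..<k})) \<inter> P k \<longleftrightarrow> x \<in> W \<inter> K \<and> level x = k"
proof
  assume x: "x \<in> (W - \<Union>(P ` {..<k})) \<inter> P k"
  then have xWK: "x \<in> W \<inter> K"
    using P_subset_K by blast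
  moreover have "level x \<le> k"
    using x level_le_iff[OF xWK] by blast
  moreover have "\<not> level x < k"
    using x level_less_iff[OF xWK] by blast
  ultimately show "x \<in> W \<inter> K \<and> level x = k"
    by simp
next
  assume "x \<in> W \<inter> K \<and> level x = k"
  then show "x \<in> (W - \<Union>(P ` {..<k})) \<inter> P k"
    using level_le_iff[of x k] level_less_iff[of x k] by auto
qed

lemma exists_higher_level:
  assumes "openin X V" "V \<inter> W \<inter> K \<noteq> {}"
  obtains y where "y \<in> V \<inter> W \<inter> K" "n < level y"
proof -
  obtain y where "y \<in> V \<inter> W \<inter> K" "y \<notin> P n"
    using P_no_interior[OF assms] by blast
  then show thesis
    using that level_le_iff[of y n] by (simp add: not_le)
qed

definition layer_fun :: "'a \<Rightarrow> real"
  where "layer_fun x = (if x \<in> W \<inter> K then 1 / (real (level x) + 2) else if x \<in> K then 1 else 0)"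

lemma layer_fun_ge: "x \<in> K \<Longrightarrow> 1 / (real (level x) + 2) \<le> layer_fun x"
  by (simp add: layer_fun_def)

lemma layer_fun_above_level:
  assumes "x \<in> W \<inter> K" "n < level x"
  shows "0 < layer_fun x" "layer_fun x \<le> 1 / (real n + 3)"
proof -
  have "real n + 3 \<le> real (level x) + 2"
    using assms(2) by simp
  then show "0 < layer_fun x" "layer_fun x \<le> 1 / (real n + 3)"
    using assms(1) by (simp_all add: layer_fun_def frac_le)
qed

lemma not_has_PCP_layer_fun: "\<not> has_PCP X layer_fun"
proof
  assume "has_PCP X layer_fun"
  moreover have "K \<noteq> {}"
    using W_Int_K_nonempty by blast
  ultimately obtain x where x: "x \<in> K" "continuity_point_on X K layer_fun x"
    using closedin_K unfolding has_PCP_def by blast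
  \<comment> \<open>For x outside W \<inter> K the value level x is junk, but there layer_fun x = 1, so the gap still works.\<close>
  define e where "e = 1 / (real (level x) + 2) - 1 / (real (level x) + 3)"
  have "e > 0"
    unfolding e_def by (simp add: frac_less2)
  then obtain V where V: "openin X V" "x \<in> V" "\<forall>y\<in>V \<inter> K. \<bar>layer_fun y - layer_fun x\<bar> < e"
    using x(2) unfolding continuity_point_on_def by blast
  have "V \<inter> (W \<inter> K) \<noteq> {}"
    using openin_Int_closure_of_eq_empty[OF V(1), of "W \<inter> K"] K_subset_closure x(1) V(2) by blast
  then obtain y where y: "y \<in> V \<inter> W \<inter> K" "level x < level y"
    using exists_higher_level[OF V(1)] by (metis Int_assoc)
  have "layer_fun y \<le> 1 / (real (level x) + 3)"
    using layer_fun_above_level(2)[OF _ y(2)] y(1) by blast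
  moreover have "1 / (real (level x) + 2) \<le> layer_fun x"
    using x(1) by (rule layer_fun_ge)
  moreover have "\<bar>layer_fun y - layer_fun x\<bar> < e"
    using V(3) y(1) by blast
  ultimately show False
    unfolding e_def by linarith
qed

lemma layer_fun_beyond_level: "layer_fun ` ((W - P N) \<inter> K) \<subseteq> {0..1 / (real N + 3)}"
proof (rule image_subsetI)
  fix y
  assume "y \<in> (W - P N) \<inter> K"
  then have "y \<in> W \<inter> K" "N < level y"
    using level_le_iff[of y N] by auto
  then show "layer_fun y \<in> {0..1 / (real N + 3)}"
    using layer_fun_above_level by (simp add: less_imp_le)
qed

lemma layer_fun_at_top_level:
  assumes "H \<subseteq> K" "\<And>y. y \<in> H \<inter> W \<Longrightarrow> level y \<le> k"
  shows "layer_fun ` ((W - \<Union>(P ` {..<k})) \<inter> H) \<subseteq> {1 / (real k + 2)}"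
proof (rule image_subsetI)
  fix y
  assume y: "y \<in> (W - \<Union>(P ` {..<k})) \<inter> H"
  then have "y \<in> W \<inter> K"
    using assms(1) by blast
  moreover have "level y = k"
    using y assms(2)[of y] level_less_iff[OF \<open>y \<in> W \<inter> K\<close>, of k] by auto
  ultimately show "layer_fun y \<in> {1 / (real k + 2)}"
    by (simp add: layer_fun_def)
qed

lemma layer_fun_fragment:
  assumes "H \<subseteq> K" "H \<inter> W \<noteq> {}" "e > 0"
  obtains V where "openin X V" "V \<inter> H \<noteq> {}" "diam_less (layer_fun ` (V \<inter> H)) e"
proof -
  obtain N where "inverse (real (Suc N)) < e"
    using reals_Archimedean assms(3) by blast
  moreover have "1 / (real N + 3) \<le> inverse (real (Suc N))"
    by (simp add: inverse_eq_divide frac_le)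
  ultimately have N: "1 / (real N + 3) < e"
    by linarith
  consider (high) x where "x \<in> H \<inter> W" "N < level x" | (low) "\<forall>x\<in>H \<inter> W. level x \<le> N"
    using not_le by blast
  then show thesis
  proof cases
    case high
    have "openin X (W - P N)"
      using openin_W closedin_P by (rule openin_diff)
    moreover have "x \<in> (W - P N) \<inter> H"
      using high assms(1) level_le_iff[of x N] by auto
    moreover have "layer_fun ` ((W - P N) \<inter> H) \<subseteq> {0..1 / (real N + 3)}"
      using layer_fun_beyond_level assms(1) by blast
    then have "diam_less (layer_fun ` ((W - P N) \<inter> H)) e"
      by (rule diam_less_atLeastAtMost) (use N in simp_all)
    ultimately show thesis
      using that by blast
  next
    case low
    define k where "k = Max (level ` (H \<inter> W))"
    have "level ` (H \<inter> W) \<subseteq> {..N}"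
      using low by auto
    then have fin: "finite (level ` (H \<inter> W))"
      by (rule finite_subset) simp
    then have "k \<in> level ` (H \<inter> W)"
      unfolding k_def using assms(2) by (intro Max_in) auto
    then obtain x where x: "x \<in> H \<inter> W" "level x = k"
      by blast
    have "openin X (W - \<Union>(P ` {..<k}))"
      using openin_W closedin_lower_layers by (rule openin_diff)
    moreover have "x \<in> (W - \<Union>(P ` {..<k})) \<inter> H"
      using x assms(1) level_less_iff[of x k] by auto
    moreover have "layer_fun ` ((W - \<Union>(P ` {..<k})) \<inter> H) \<subseteq> {1 / (real k + 2)}"
      by (rule layer_fun_at_top_level[OF assms(1)]) (use fin in \<open>auto simp: k_def\<close>)
    then have "diam_less (layer_fun ` ((W - \<Union>(P ` {..<k})) \<inter> H)) e"
      using assms(3) by (rule diam_less_singleton)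
    ultimately show thesis
      using that by blast
  qed
qed

lemma fragmentable_layer_fun: "fragmentable X layer_fun"
  unfolding fragmentable_def
proof (intro allI impI)
  fix e :: real and H
  assume e: "e > 0" and H: "closedin X H \<and> H \<noteq> {}"
  consider "\<not> H \<subseteq> K" | "H \<subseteq> K" "H \<inter> W = {}" | "H \<subseteq> K" "H \<inter> W \<noteq> {}"
    by blast
  then show "\<exists>V. openin X V \<and> V \<inter> H \<noteq> {} \<and> diam_less (layer_fun ` (V \<inter> H)) e"
  proof cases
    case 1
    have "openin X (topspace X - K)"
      using closedin_K by blast
    moreover have "(topspace X - K) \<inter> H \<noteq> {}"
      using 1 H closedin_subset by blast
    moreover have "layer_fun ` ((topspace X - K) \<inter> H) \<subseteq> {0}"
      by (auto simp: layer_fun_def)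
    ultimately show ?thesis
      using e diam_less_singleton by blast
  next
    case 2
    have "layer_fun ` (topspace X \<inter> H) \<subseteq> {1}"
      using 2 by (auto simp: layer_fun_def)
    moreover have "topspace X \<inter> H \<noteq> {}"
      using H closedin_subset by blast
    ultimately show ?thesis
      using e diam_less_singleton openin_topspace by blast
  next
    case 3
    then show ?thesis
      using layer_fun_fragment e by metis
  qed
qed

lemma lebesgue_property_layer_fun:
  assumes "perfectly_normal X"
  shows "lebesgue_property X layer_fun"
proof -
  define L where "L k = (W - \<Union>(P ` {..<k})) \<inter> P k" for k
  let ?\<S> = "insert (topspace X - K) (insert (K - W) (range L))"
  show ?thesis
  proof (rule lebesgue_property_if_constant_on_fsigma_cover[of ?\<S>])
    show "countable ?\<S>"
      by simp
    show "fsigma_in X S" if "S \<in> ?\<S>" for S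
    proof -
      have "fsigma_in X (topspace X - K)"
        using assms closedin_K by (simp add: perfectly_normal_openin_imp_fsigma_in openin_diff)
      moreover have "fsigma_in X (K - W)"
        using closedin_K openin_W by (simp add: closed_imp_fsigma_in closedin_diff)
      moreover have "fsigma_in X (L k)" for k
        unfolding L_def using assms openin_W closedin_lower_layers closedin_P
        by (simp add: fsigma_in_Int perfectly_normal_openin_imp_fsigma_in openin_diff closed_imp_fsigma_in)
      ultimately show ?thesis
        using that by blast
    qed
    show "topspace X \<subseteq> \<Union>?\<S>"
    proof
      fix x
      assume "x \<in> topspace X"
      moreover have "x \<in> L (level x)" if "x \<in> W \<inter> K"
        unfolding L_def using that mem_level_set_iff by blast
      ultimately show "x \<in> \<Union>?\<S>"
        by blast
    qed
    show "layer_fun x = layer_fun y" if S: "S \<in> ?\<S>" and xy: "x \<in> S" "y \<in> S" for S x y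
    proof -
      consider "S = topspace X - K" | "S = K - W" | k where "S = L k"
        using S by blast
      then show ?thesis
      proof cases
        case 3
        then have "x \<in> W \<inter> K \<and> level x = k" "y \<in> W \<inter> K \<and> level y = k"
          using xy mem_level_set_iff unfolding L_def by blast+
        then show ?thesis
          by (simp add: layer_fun_def)
      qed (use xy in \<open>auto simp: layer_fun_def\<close>)
    qed
  qed
qed

end

lemma not_hereditarily_baire_imp_meager_layering:
  assumes "\<not> hereditarily_baire X"
  obtains K W P where "meager_layering X K W P"
proof -
  obtain F where F: "closedin X F" "\<not> baire_space (subtopology X F)"
    using assms unfolding hereditarily_baire_def by blast
  then obtain U where U: "openin (subtopology X F) U" "U \<noteq> {}" "meager_in (subtopology X F) U"
    unfolding baire_space_def by blast
  then obtain N :: "nat \<Rightarrow> 'a set"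
    where N: "\<And>n. nowhere_dense_in (subtopology X F) (N n)" "U \<subseteq> (\<Union>n. N n)"
    unfolding meager_in_def by blast
  obtain W where W: "openin X W" "U = W \<inter> F"
    using U(1) by (auto simp: openin_subtopology)
  define K where "K = X closure_of U"
  define M where "M n = (\<Union>j\<le>n. N j)" for n
  define P where "P n = K \<inter> X closure_of M n" for n
  have "U \<subseteq> K"
    unfolding K_def using W(2) closedin_subset[OF F(1)] by (intro closure_of_subset) blast
  moreover have "K \<subseteq> F"
    unfolding K_def using W(2) F(1) by (intro closure_of_minimal) auto
  ultimately have WK: "W \<inter> K = U"
    using W(2) by blast
  have M: "nowhere_dense_in (subtopology X F) (M n)" for n
    unfolding M_def using N(1) by (rule nowhere_dense_in_UN_atMost)
  show thesis
  proof (rule that, unfold_locales)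
    show "closedin X K"
      by (simp add: K_def)
    show "openin X W"
      by (rule W(1))
    show "W \<inter> K \<noteq> {}"
      using WK U(2) by simp
    show "K \<subseteq> X closure_of (W \<inter> K)"
      using WK by (simp add: K_def)
    show "closedin X (P n)" for n
      unfolding P_def K_def by (intro closedin_Int) simp_all
    show "P n \<subseteq> K" for n
      unfolding P_def by blast
    have "X closure_of M m \<subseteq> X closure_of M n" if "m \<le> n" for m n
      by (rule closure_of_mono) (use that in \<open>force simp: M_def\<close>)
    then show "incseq P"
      unfolding incseq_def P_def by blast
    show "W \<inter> K \<subseteq> (\<Union>n. P n)"
    proof
      fix x
      assume "x \<in> W \<inter> K"
      then obtain n where "x \<in> N n" "x \<in> K"
        using WK N(2) by blast
      moreover have "M n \<subseteq> X closure_of M n"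
        using M[of n] closedin_subset[OF F(1)] by (intro closure_of_subset) (auto simp: nowhere_dense_in_def)
      ultimately show "x \<in> (\<Union>n. P n)"
        unfolding P_def M_def by blast
    qed
    show "\<not> V \<inter> W \<inter> K \<subseteq> P n" if "openin X V" "V \<inter> W \<inter> K \<noteq> {}" for V n
    proof -
      have "V \<inter> W \<inter> K = (V \<inter> W) \<inter> F"
        using WK W(2) by blast
      then have "\<not> V \<inter> W \<inter> K \<subseteq> X closure_of M n"
        using nowhere_dense_in_subtopology_not_subset_closure[OF M, of "V \<inter> W"] that W(1)
        by (simp add: openin_Int)
      then show ?thesis
        unfolding P_def by blast
    qed
  qed
qed

theorem proposition2p9:
  fixes X :: "'a topology"
  shows "(hereditarily_baire X \<longleftrightarrow> (\<forall>f. fragmentable X f \<longrightarrow> has_PCP X f))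
    \<and> (perfectly_normal X \<longrightarrow>
         (hereditarily_baire X \<longleftrightarrow> (\<forall>f. lebesgue_property X f \<longrightarrow> has_PCP X f)))"
proof (intro conjI impI iffI allI)
  show "has_PCP X f" if "hereditarily_baire X" "fragmentable X f" for f
    using that by (rule hereditarily_baire_fragmentable_imp_PCP)
  show "has_PCP X f" if "hereditarily_baire X" "lebesgue_property X f" for f
    using that(1) hereditarily_baire_lebesgue_imp_fragmentable[OF that]
    by (rule hereditarily_baire_fragmentable_imp_PCP)
  show "hereditarily_baire X" if "\<forall>f. fragmentable X f \<longrightarrow> has_PCP X f"
  proof (rule ccontr)
    assume "\<not> hereditarily_baire X"
    then obtain K W P where "meager_layering X K W P"
      by (rule not_hereditarily_baire_imp_meager_layering)
    then show False
      using that meager_layering.fragmentable_layer_fun meager_layering.not_has_PCP_layer_fun by blast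
  qed
  show "hereditarily_baire X"
    if "perfectly_normal X" "\<forall>f. lebesgue_property X f \<longrightarrow> has_PCP X f"
  proof (rule ccontr)
    assume "\<not> hereditarily_baire X"
    then obtain K W P where "meager_layering X K W P"
      by (rule not_hereditarily_baire_imp_meager_layering)
    then show False
      using that meager_layering.lebesgue_property_layer_fun meager_layering.not_has_PCP_layer_fun
      by blast
  qed
qed

end
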